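(* Let $a_1,\dots,a_n$ be positive integers, $P=\mathbf{a_1}\oplus\cdots\oplus\mathbf{a_n}$ with top antichain summand $A_n$, and $I\in\mathcal{IC}(P)$. Then \[\mathrm{Row}(I)=\begin{cases}P-I & \text{if } I=\emptyset,\ A_n\subseteq I,\text{ or } I\subseteq A_n,\\ \Delta(\lceil I\rceil)-\Delta(\mathrm{Min}(I)) & \text{otherwise.}\end{cases}\]
   Context: For posets $P,Q$, the ordinal sum $P\oplus Q$ has underlying set the disjoint union of $P$ and $Q$, with $x\le y$ iff $x\le_P y$, or $x\le_Q y$, or $x\in P$ and $y\in Q$. $\mathbf{a}$ denotes an antichain with $a$ elements; in $\mathbf{a_1}\oplus\cdots\oplus\mathbf{a_n}$, $A_i$ is the $i$-th summand, $A_1$ at the bottom. All posets are finite. A subset $I\subseteq P$ is interval-closed if for all $x,y\in I$ and $z\in P$ with $x\le z\le y$ we have $z\in I$; $\mathcal{IC}(P)$ is the set of interval-closed subsets of $P$. For $x\in P$ the toggle $t_x:\mathcal{IC}(P)\to\mathcal{IC}(P)$ is defined by $t_x(I)=I\triangle\{x\}$ if $I\triangle\{x\}\in\mathcal{IC}(P)$ and $t_x(I)=I$ otherwise. Rowmotion is $\mathrm{Row}=t_{x_1}\circ t_{x_2}\circ\cdots\circ t_{x_N}$, where $(x_1,\dots,x_N)$ is a linear extension of $P$ (toggling from the top down). For $S\subseteq P$, $\Delta(S)$ is the smallest order ideal containing $S$ and $\nabla(S)$ the smallest order filter containing $S$; $\mathrm{Min}(S)$ is the set of minimal elements of $S$;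 the ceiling $\lceil I\rceil$ is the set of minimal elements of $\nabla(I)-I$. *)

theory Defs
  imports Main
begin

definition interval_closed :: "'a set \<Rightarrow> ('a \<Rightarrow> 'a \<Rightarrow> bool) \<Rightarrow> 'a set \<Rightarrow> bool" where
  "interval_closed P le I \<longleftrightarrow> I \<subseteq> P \<and>
     (\<forall>x\<in>I. \<forall>y\<in>I. \<forall>z\<in>P. le x z \<and> le z y \<longrightarrow> z \<in> I)"

definition toggle :: "'a set \<Rightarrow> ('a \<Rightarrow> 'a \<Rightarrow> bool) \<Rightarrow> 'a \<Rightarrow> 'a set \<Rightarrow> 'a set" where
  "toggle P le x I =
     (let J = (I - {x}) \<union> ({x} - I) in if interval_closed P le J then J else I)"

definition linear_extension :: "'a set \<Rightarrow> ('a \<Rightarrow> 'a \<Rightarrow> bool) \<Rightarrow> 'a list \<Rightarrow> bool" where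
  "linear_extension P le xs \<longleftrightarrow> distinct xs \<and> set xs = P \<and>
     (\<forall>i<length xs. \<forall>j<length xs. le (xs ! i) (xs ! j) \<longrightarrow> i \<le> j)"

text \<open>Row = t_{x_1} o t_{x_2} o ... o t_{x_N} (so t_{x_N} is applied first).\<close>
definition rowmotion :: "'a set \<Rightarrow> ('a \<Rightarrow> 'a \<Rightarrow> bool) \<Rightarrow> 'a list \<Rightarrow> 'a set \<Rightarrow> 'a set" where
  "rowmotion P le xs I = foldr (toggle P le) xs I"

definition down_closure :: "'a set \<Rightarrow> ('a \<Rightarrow> 'a \<Rightarrow> bool) \<Rightarrow> 'a set \<Rightarrow> 'a set" where
  "down_closure P le S = {y\<in>P. \<exists>x\<in>S. le y x}"

definition up_closure :: "'a set \<Rightarrow> ('a \<Rightarrow> 'a \<Rightarrow> bool) \<Rightarrow> 'a set \<Rightarrow> 'a set" where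
  "up_closure P le S = {y\<in>P. \<exists>x\<in>S. le x y}"

definition minimal_elts :: "('a \<Rightarrow> 'a \<Rightarrow> bool) \<Rightarrow> 'a set \<Rightarrow> 'a set" where
  "minimal_elts le S = {x\<in>S. \<forall>y\<in>S. le y x \<longrightarrow> y = x}"

definition ceiling_ic :: "'a set \<Rightarrow> ('a \<Rightarrow> 'a \<Rightarrow> bool) \<Rightarrow> 'a set \<Rightarrow> 'a set" where
  "ceiling_ic P le I = minimal_elts le (up_closure P le I - I)"

text \<open>Ordinal sum of antichains a_1 + ... + a_n, 0-indexed: element (i,j) is the
  j-th element of summand A_{i+1}, for i < n and j < a i.\<close>
definition osum_carrier :: "(nat \<Rightarrow> nat) \<Rightarrow> nat \<Rightarrow> (nat \<times> nat) set" where
  "osum_carrier a n = {(i, j). i < n \<and> j < a i}"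

definition osum_le :: "nat \<times> nat \<Rightarrow> nat \<times> nat \<Rightarrow> bool" where
  "osum_le x y \<longleftrightarrow> x = y \<or> fst x < fst y"

definition osum_top :: "(nat \<Rightarrow> nat) \<Rightarrow> nat \<Rightarrow> (nat \<times> nat) set" where
  "osum_top a n = {(i, j). i = n - 1 \<and> j < a (n - 1)}"

end

theory Submission
  imports Defs
begin

text \<open>In an ordinal sum of antichains two elements are comparable exactly when they lie on
  different levels, so interval-closedness only sees levels, and whether a toggle at \<open>x\<close>
  succeeds only depends on the current set off the level of \<open>x\<close>. During the top-down sweep
  the levels above \<open>x\<close> already hold \<open>Row(I)\<close> and those below still hold \<open>I\<close>; hence \<open>Row(I)\<close> is
  the unique set satisfying a local insertion and removal rule at every element. An interval-closed \<open>I\<close> is a partial lowest level \<open>lo\<close>, full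
  middle levels and a partial highest level. In the three exceptional cases \<open>I\<close> is an up-set and
  the complement satisfies the rules. Otherwise let \<open>c\<close> be the lowest level above \<open>lo\<close> not
  contained in \<open>I\<close>: the rules are satisfied by levels \<open>lo\<close> to \<open>c\<close> without the elements of \<open>I\<close> on
  levels \<open>lo\<close> and \<open>c\<close>, and this set is \<open>\<Delta>(\<lceil>I\<rceil>) - \<Delta>(Min(I))\<close>, since \<open>\<lceil>I\<rceil>\<close> is the part of level \<open>c\<close>
  outside \<open>I\<close> and \<open>Min(I)\<close> is the part of level \<open>lo\<close> inside \<open>I\<close>.\<close>

lemma interval_closed_osum_iff:
  "interval_closed P osum_le S \<longleftrightarrow> S \<subseteq> P \<and>
     (\<forall>x\<in>S. \<forall>y\<in>S. \<forall>z\<in>P. fst x < fst z \<and> fst z < fst y \<longrightarrow> z \<in> S)"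
  unfolding interval_closed_def osum_le_def by auto

lemma interval_closed_toggle:
  "interval_closed P le J \<Longrightarrow> interval_closed P le (toggle P le x J)"
  by (simp add: toggle_def Let_def)

lemma interval_closed_foldr_toggle:
  "interval_closed P le I \<Longrightarrow> interval_closed P le (foldr (toggle P le) ys I)"
  by (induction ys) (auto intro: interval_closed_toggle)

lemma toggle_eqI:
  assumes "x \<notin> U"
    and "x \<notin> I \<Longrightarrow> interval_closed P le (insert x (R \<inter> U \<union> (I - U))) \<longleftrightarrow> x \<in> R"
    and "x \<in> I \<Longrightarrow> interval_closed P le ((R \<inter> U \<union> (I - U)) - {x}) \<longleftrightarrow> x \<notin> R"
  shows "toggle P le x (R \<inter> U \<union> (I - U)) = R \<inter> insert x U \<union> (I - insert x U)"
proof (cases "x \<in> I")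
  case True
  then have "(R \<inter> U \<union> (I - U)) - {x} \<union> ({x} - (R \<inter> U \<union> (I - U))) = (R \<inter> U \<union> (I - U)) - {x}"
    using assms(1) by auto
  then show ?thesis using assms(1,3) True unfolding toggle_def Let_def by auto
next
  case False
  then have "(R \<inter> U \<union> (I - U)) - {x} \<union> ({x} - (R \<inter> U \<union> (I - U))) = insert x (R \<inter> U \<union> (I - U))"
    using assms(1) by auto
  then show ?thesis using assms(1,2) False unfolding toggle_def Let_def by auto
qed

lemma foldr_toggle_eqI:
  assumes "interval_closed P le I"
    and "\<And>us x vs. ys = us @ x # vs \<Longrightarrow> interval_closed P le (R \<inter> set vs \<union> (I - set vs)) \<Longrightarrow>
       toggle P le x (R \<inter> set vs \<union> (I - set vs)) = R \<inter> set (x # vs) \<union> (I - set (x # vs))"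
  shows "foldr (toggle P le) ys I = R \<inter> set ys \<union> (I - set ys)"
  using assms(2)
proof (induction ys)
  case Nil
  show ?case by simp
next
  case (Cons y ys)
  have IH: "foldr (toggle P le) ys I = R \<inter> set ys \<union> (I - set ys)"
    using Cons.prems[of "y # _"] by (intro Cons.IH) simp
  moreover have "interval_closed P le (R \<inter> set ys \<union> (I - set ys))"
    using interval_closed_foldr_toggle[OF assms(1), of ys] IH by simp
  ultimately show ?case using Cons.prems[of "[]" y ys] by simp
qed

lemma linear_extension_osum_suffix:
  assumes "linear_extension P osum_le xs" and xs: "xs = us @ x # vs"
  shows "x \<in> P" "x \<notin> set vs" "set vs \<subseteq> P"
    and "\<And>y. y \<in> P \<Longrightarrow> fst x < fst y \<Longrightarrow> y \<in> set vs"
    and "\<And>y. y \<in> set vs \<Longrightarrow> fst x \<le> fst y"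
proof -
  have dist: "distinct xs" and set_xs: "set xs = P"
    and ord: "\<And>i j. i < length xs \<Longrightarrow> j < length xs \<Longrightarrow> osum_le (xs ! i) (xs ! j) \<Longrightarrow> i \<le> j"
    using assms(1) unfolding linear_extension_def by auto
  show "x \<in> P" "x \<notin> set vs" "set vs \<subseteq> P" using dist set_xs xs by auto
  have x_nth: "xs ! length us = x" and len: "length us < length xs" using xs by auto
  show "y \<in> set vs" if y: "y \<in> P" "fst x < fst y" for y
  proof -
    obtain j where j: "j < length xs" "xs ! j = y"
      using y(1) by (auto simp: set_xs[symmetric] in_set_conv_nth)
    have "length us \<le> j" using ord[OF len j(1)] x_nth j(2) y(2) unfolding osum_le_def by simp
    moreover have "j \<noteq> length us" using x_nth j(2) y(2) by auto
    ultimately have lt: "length us < j" by simp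
    then have "vs ! (j - Suc (length us)) = y" using xs j(2) by (simp add: nth_append nth_Cons')
    moreover have "j - Suc (length us) < length vs" using xs j(1) lt by simp
    ultimately show ?thesis by (metis nth_mem)
  qed
  show "fst x \<le> fst y" if y: "y \<in> set vs" for y
  proof (rule ccontr)
    assume "\<not> fst x \<le> fst y"
    obtain k where k: "k < length vs" "vs ! k = y" using y by (auto simp: in_set_conv_nth)
    have "xs ! Suc (length us + k) = y" "Suc (length us + k) < length xs"
      using xs k by (simp_all add: nth_append)
    then have "Suc (length us + k) \<le> length us"
      using ord[OF _ len] x_nth \<open>\<not> fst x \<le> fst y\<close> unfolding osum_le_def by simp
    then show False by simp
  qed
qed

lemma interval_closed_osumD:
  "interval_closed P osum_le S \<Longrightarrow> c \<in> S \<Longrightarrow> d \<in> S \<Longrightarrow> z \<in> P \<Longrightarrow>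
    fst c < fst z \<Longrightarrow> fst z < fst d \<Longrightarrow> z \<in> S"
  unfolding interval_closed_osum_iff by blast

lemma interval_closed_osumI:
  "S \<subseteq> P \<Longrightarrow> (\<And>c d z. c \<in> S \<Longrightarrow> d \<in> S \<Longrightarrow> z \<in> P \<Longrightarrow> fst c < fst z \<Longrightarrow> fst z < fst d \<Longrightarrow> z \<in> S)
    \<Longrightarrow> interval_closed P osum_le S"
  unfolding interval_closed_osum_iff by blast

lemma interval_closed_osum_insert_iff:
  assumes "interval_closed P osum_le J" "x \<in> P"
  shows "interval_closed P osum_le (insert x J) \<longleftrightarrow>
    (\<forall>b\<in>J. \<forall>z\<in>P. fst x < fst z \<and> fst z < fst b \<or> fst b < fst z \<and> fst z < fst x \<longrightarrow> z \<in> J)"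
proof
  assume ic: "interval_closed P osum_le (insert x J)"
  show "\<forall>b\<in>J. \<forall>z\<in>P. fst x < fst z \<and> fst z < fst b \<or> fst b < fst z \<and> fst z < fst x \<longrightarrow> z \<in> J"
  proof (intro ballI impI)
    fix b z
    assume b: "b \<in> J" and z: "z \<in> P"
      and between: "fst x < fst z \<and> fst z < fst b \<or> fst b < fst z \<and> fst z < fst x"
    then have "z \<in> insert x J"
      using interval_closed_osumD[OF ic, of x b z] interval_closed_osumD[OF ic, of b x z] by auto
    moreover have "z \<noteq> x" using between by auto
    ultimately show "z \<in> J" by simp
  qed
next
  assume gap: "\<forall>b\<in>J. \<forall>z\<in>P. fst x < fst z \<and> fst z < fst b \<or> fst b < fst z \<and> fst z < fst x \<longrightarrow> z \<in> J"
  show "interval_closed P osum_le (insert x J)"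
  proof (rule interval_closed_osumI)
    show "insert x J \<subseteq> P" using assms by (simp add: interval_closed_def)
    fix c d z
    assume c: "c \<in> insert x J" and d: "d \<in> insert x J" and z: "z \<in> P"
      and lt: "fst c < fst z" "fst z < fst d"
    show "z \<in> insert x J"
    proof (cases "c = x")
      case True
      then have "d \<in> J" using d lt by auto
      then show ?thesis using gap[rule_format, OF _ z] True lt by simp
    next
      case False
      then have "c \<in> J" using c by simp
      show ?thesis
      proof (cases "d = x")
        case True
        then show ?thesis using gap[rule_format, OF \<open>c \<in> J\<close> z] lt by simp
      next
        case False
        then show ?thesis using interval_closed_osumD[OF assms(1) \<open>c \<in> J\<close> _ z lt] d by simp
      qed
    qed
  qed
qed

lemma interval_closed_osum_remove_iff:
  assumes ic: "interval_closed P osum_le J" and "x \<in> P"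
  shows "interval_closed P osum_le (J - {x}) \<longleftrightarrow> \<not> (\<exists>c\<in>J. \<exists>b\<in>J. fst c < fst x \<and> fst x < fst b)"
proof
  assume ic': "interval_closed P osum_le (J - {x})"
  show "\<not> (\<exists>c\<in>J. \<exists>b\<in>J. fst c < fst x \<and> fst x < fst b)"
  proof
    assume "\<exists>c\<in>J. \<exists>b\<in>J. fst c < fst x \<and> fst x < fst b"
    then obtain c b where "c \<in> J" "b \<in> J" and lt: "fst c < fst x" "fst x < fst b" by blast
    then have "c \<in> J - {x}" "b \<in> J - {x}" by auto
    then have "x \<in> J - {x}" using interval_closed_osumD[OF ic' _ _ \<open>x \<in> P\<close> lt] by simp
    then show False by simp
  qed
next
  assume no_straddle: "\<not> (\<exists>c\<in>J. \<exists>b\<in>J. fst c < fst x \<and> fst x < fst b)"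
  show "interval_closed P osum_le (J - {x})"
  proof (rule interval_closed_osumI)
    show "J - {x} \<subseteq> P" using ic by (auto simp: interval_closed_def)
    fix c d z
    assume c: "c \<in> J - {x}" and d: "d \<in> J - {x}" and z: "z \<in> P" and lt: "fst c < fst z" "fst z < fst d"
    then have "z \<in> J" using interval_closed_osumD[OF ic _ _ z lt] by simp
    moreover have "z \<noteq> x" using no_straddle c d lt by auto
    ultimately show "z \<in> J - {x}" by simp
  qed
qed

lemma rowmotion_osum_eqI:
  fixes P I R :: "(nat \<times> nat) set"
  assumes ic: "interval_closed P osum_le I" and L: "linear_extension P osum_le xs" and "R \<subseteq> P"
    and insert_rule: "\<And>x. x \<in> P - I \<Longrightarrow> x \<in> R \<longleftrightarrow>
        (\<forall>b\<in>R. \<forall>z\<in>P. fst x < fst z \<and> fst z < fst b \<longrightarrow> z \<in> R) \<and>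
        (\<forall>b\<in>I. \<forall>z\<in>P. fst b < fst z \<and> fst z < fst x \<longrightarrow> z \<in> I)"
    and remove_rule: "\<And>x. x \<in> I \<Longrightarrow> x \<in> R \<longleftrightarrow> (\<exists>c\<in>I. \<exists>b\<in>R. fst c < fst x \<and> fst x < fst b)"
  shows "rowmotion P osum_le xs I = R"
proof -
  have "I \<subseteq> P" using ic by (simp add: interval_closed_def)
  have "foldr (toggle P osum_le) xs I = R \<inter> set xs \<union> (I - set xs)"
  proof (rule foldr_toggle_eqI[OF ic])
    fix us x vs
    assume split: "xs = us @ x # vs" and ic_J: "interval_closed P osum_le (R \<inter> set vs \<union> (I - set vs))"
    define J where "J = R \<inter> set vs \<union> (I - set vs)"
    note suffix = linear_extension_osum_suffix[OF L split]
    have above: "z \<in> J \<longleftrightarrow> z \<in> R" if "z \<in> P" "fst x < fst z" for z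
      using suffix(4)[OF that] unfolding J_def by blast
    have below: "z \<in> J \<longleftrightarrow> z \<in> I" if "fst z < fst x" for z
      using suffix(5)[of z] that unfolding J_def by auto
    have "J \<subseteq> P" using \<open>R \<subseteq> P\<close> \<open>I \<subseteq> P\<close> unfolding J_def by blast
    have "toggle P osum_le x J = R \<inter> insert x (set vs) \<union> (I - insert x (set vs))"
      unfolding J_def
    proof (rule toggle_eqI[OF suffix(2)], fold J_def)
      assume "x \<notin> I"
      have "interval_closed P osum_le (insert x J) \<longleftrightarrow>
          (\<forall>b\<in>J. \<forall>z\<in>P. fst x < fst z \<and> fst z < fst b \<or> fst b < fst z \<and> fst z < fst x \<longrightarrow> z \<in> J)"
        using interval_closed_osum_insert_iff[OF ic_J[folded J_def] suffix(1)] .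
      also have "\<dots> \<longleftrightarrow> (\<forall>b\<in>R. \<forall>z\<in>P. fst x < fst z \<and> fst z < fst b \<longrightarrow> z \<in> R) \<and>
          (\<forall>b\<in>I. \<forall>z\<in>P. fst b < fst z \<and> fst z < fst x \<longrightarrow> z \<in> I)"
        using above below \<open>J \<subseteq> P\<close> \<open>R \<subseteq> P\<close> \<open>I \<subseteq> P\<close> by (meson order.strict_trans subsetD)
      also have "\<dots> \<longleftrightarrow> x \<in> R" using insert_rule suffix(1) \<open>x \<notin> I\<close> by simp
      finally show "interval_closed P osum_le (insert x J) \<longleftrightarrow> x \<in> R" .
    next
      assume "x \<in> I"
      have "interval_closed P osum_le (J - {x}) \<longleftrightarrow> \<not> (\<exists>c\<in>J. \<exists>b\<in>J. fst c < fst x \<and> fst x < fst b)"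
        using interval_closed_osum_remove_iff[OF ic_J[folded J_def] suffix(1)] .
      also have "\<dots> \<longleftrightarrow> \<not> (\<exists>c\<in>I. \<exists>b\<in>R. fst c < fst x \<and> fst x < fst b)"
        using above below \<open>J \<subseteq> P\<close> \<open>R \<subseteq> P\<close> by blast
      also have "\<dots> \<longleftrightarrow> x \<notin> R" using remove_rule \<open>x \<in> I\<close> by simp
      finally show "interval_closed P osum_le (J - {x}) \<longleftrightarrow> x \<notin> R" .
    qed
    then show "toggle P osum_le x (R \<inter> set vs \<union> (I - set vs)) = R \<inter> set (x # vs) \<union> (I - set (x # vs))"
      by (simp add: J_def)
  qed
  moreover have "set xs = P" using L by (simp add: linear_extension_def)
  ultimately show ?thesis using \<open>R \<subseteq> P\<close> \<open>I \<subseteq> P\<close> unfolding rowmotion_def by auto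
qed

lemma rowmotion_osum_up_closed:
  fixes P I :: "(nat \<times> nat) set"
  assumes ic: "interval_closed P osum_le I" and L: "linear_extension P osum_le xs"
    and up: "\<And>y z. y \<in> I \<Longrightarrow> z \<in> P \<Longrightarrow> fst y < fst z \<Longrightarrow> z \<in> I"
  shows "rowmotion P osum_le xs I = P - I"
proof (rule rowmotion_osum_eqI[OF ic L])
  show "P - I \<subseteq> P" by blast
  fix x
  show "x \<in> P - I \<Longrightarrow> x \<in> P - I \<longleftrightarrow>
      (\<forall>b\<in>P - I. \<forall>z\<in>P. fst x < fst z \<and> fst z < fst b \<longrightarrow> z \<in> P - I) \<and>
      (\<forall>b\<in>I. \<forall>z\<in>P. fst b < fst z \<and> fst z < fst x \<longrightarrow> z \<in> I)"
    using up by blast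
  show "x \<in> I \<Longrightarrow> x \<in> P - I \<longleftrightarrow> (\<exists>c\<in>I. \<exists>b\<in>P - I. fst c < fst x \<and> fst x < fst b)"
    using up by blast
qed

lemma rowmotion_osum_window:
  fixes P I :: "(nat \<times> nat) set"
  assumes ic: "interval_closed P osum_le I" and L: "linear_extension P osum_le xs"
    and y0: "y0 \<in> I" and y0_min: "\<And>y. y \<in> I \<Longrightarrow> fst y0 \<le> fst y"
    and w: "w \<in> P - I" "fst y0 < fst w"
    and w_min: "\<And>z. z \<in> P - I \<Longrightarrow> fst y0 < fst z \<Longrightarrow> fst w \<le> fst z"
  shows "rowmotion P osum_le xs I =
    {z \<in> P. fst y0 \<le> fst z \<and> fst z \<le> fst w \<and> (z \<in> I \<longrightarrow> fst y0 < fst z \<and> fst z < fst w)}"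
    (is "_ = ?R")
proof -
  have "I \<subseteq> P" using ic by (simp add: interval_closed_def)
  have I_below: "fst y \<le> fst w" if "y \<in> I" for y
  proof (rule ccontr)
    assume "\<not> fst y \<le> fst w"
    then have "w \<in> I" using interval_closed_osumD[OF ic y0 that, of w] w by auto
    then show False using w by simp
  qed
  have inner: "z \<in> I" if "z \<in> P" "fst y0 < fst z" "fst z < fst w" for z
    using w_min[of z] that by force
  show ?thesis
  proof (rule rowmotion_osum_eqI[OF ic L])
    show "?R \<subseteq> P" by blast
    fix x
    assume x: "x \<in> P - I"
    show "x \<in> ?R \<longleftrightarrow> (\<forall>b\<in>?R. \<forall>z\<in>P. fst x < fst z \<and> fst z < fst b \<longrightarrow> z \<in> ?R) \<and>
        (\<forall>b\<in>I. \<forall>z\<in>P. fst b < fst z \<and> fst z < fst x \<longrightarrow> z \<in> I)"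
    proof
      assume "x \<in> ?R"
      then have "fst y0 \<le> fst x" "fst x \<le> fst w" by auto
      then show "(\<forall>b\<in>?R. \<forall>z\<in>P. fst x < fst z \<and> fst z < fst b \<longrightarrow> z \<in> ?R) \<and>
          (\<forall>b\<in>I. \<forall>z\<in>P. fst b < fst z \<and> fst z < fst x \<longrightarrow> z \<in> I)"
        using inner y0_min by fastforce
    next
      assume gaps: "(\<forall>b\<in>?R. \<forall>z\<in>P. fst x < fst z \<and> fst z < fst b \<longrightarrow> z \<in> ?R) \<and>
          (\<forall>b\<in>I. \<forall>z\<in>P. fst b < fst z \<and> fst z < fst x \<longrightarrow> z \<in> I)"
      have "w \<in> ?R" "y0 \<in> P" "y0 \<notin> ?R" using w y0 \<open>I \<subseteq> P\<close> by auto
      then have "fst y0 \<le> fst x" using gaps w(2) by (meson not_le)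
      moreover have "fst x \<le> fst w" using gaps y0 w by (meson DiffE not_le)
      ultimately show "x \<in> ?R" using x by simp
    qed
  next
    fix x
    assume x: "x \<in> I"
    show "x \<in> ?R \<longleftrightarrow> (\<exists>c\<in>I. \<exists>b\<in>?R. fst c < fst x \<and> fst x < fst b)"
    proof
      assume "x \<in> ?R"
      then have "fst y0 < fst x" "fst x < fst w" using x by auto
      moreover have "w \<in> ?R" using w by auto
      ultimately show "\<exists>c\<in>I. \<exists>b\<in>?R. fst c < fst x \<and> fst x < fst b"
        using y0 by blast
    next
      assume "\<exists>c\<in>I. \<exists>b\<in>?R. fst c < fst x \<and> fst x < fst b"
      then obtain c b where "c \<in> I" "b \<in> ?R" "fst c < fst x" "fst x < fst b" by blast
      then have "fst y0 < fst x" "fst x < fst w" using y0_min[of c] by auto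
      then show "x \<in> ?R" using x \<open>I \<subseteq> P\<close> by auto
    qed
  qed
qed

lemma down_closure_osum: "down_closure P osum_le S = {z \<in> P. \<exists>s\<in>S. z = s \<or> fst z < fst s}"
  unfolding down_closure_def osum_le_def by blast

lemma minimal_elts_osum:
  assumes "y0 \<in> I" "\<And>y. y \<in> I \<Longrightarrow> fst y0 \<le> fst y"
  shows "minimal_elts osum_le I = {y \<in> I. fst y = fst y0}"
  using assms unfolding minimal_elts_def osum_le_def by force

lemma ceiling_ic_osum:
  assumes "I \<subseteq> P" "y0 \<in> I" and y0_min: "\<And>y. y \<in> I \<Longrightarrow> fst y0 \<le> fst y"
    and w: "w \<in> P - I" "fst y0 < fst w"
    and w_min: "\<And>z. z \<in> P - I \<Longrightarrow> fst y0 < fst z \<Longrightarrow> fst w \<le> fst z"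
  shows "ceiling_ic P osum_le I = {z \<in> P - I. fst z = fst w}"
proof -
  have "up_closure P osum_le I - I = {z \<in> P - I. fst y0 < fst z}"
  proof (intro set_eqI iffI)
    fix z assume "z \<in> up_closure P osum_le I - I"
    then obtain y where "y \<in> I" "z \<in> P - I" "osum_le y z" unfolding up_closure_def by blast
    then show "z \<in> {z \<in> P - I. fst y0 < fst z}" using y0_min[of y] unfolding osum_le_def by auto
  next
    fix z assume "z \<in> {z \<in> P - I. fst y0 < fst z}"
    then show "z \<in> up_closure P osum_le I - I"
      using \<open>y0 \<in> I\<close> unfolding up_closure_def osum_le_def by blast
  qed
  then have ceiling: "z \<in> ceiling_ic P osum_le I \<longleftrightarrow> z \<in> P - I \<and> fst y0 < fst z \<and>
      (\<forall>u. u \<in> P - I \<and> fst y0 < fst u \<and> (u = z \<or> fst u < fst z) \<longrightarrow> u = z)" for z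
    unfolding ceiling_ic_def minimal_elts_def osum_le_def by blast
  show ?thesis
  proof (intro set_eqI iffI)
    fix z assume "z \<in> ceiling_ic P osum_le I"
    then have z: "z \<in> P - I" "fst y0 < fst z"
      and z_min: "\<And>u. u \<in> P - I \<Longrightarrow> fst y0 < fst u \<Longrightarrow> fst u < fst z \<Longrightarrow> u = z"
      using ceiling[of z] by blast+
    have "\<not> fst w < fst z" using z_min[OF w] by auto
    then show "z \<in> {z \<in> P - I. fst z = fst w}" using z w_min[OF z] by simp
  next
    fix z assume "z \<in> {z \<in> P - I. fst z = fst w}"
    then show "z \<in> ceiling_ic P osum_le I" using ceiling[of z] w w_min by fastforce
  qed
qed

lemma osum_top_eq: "n \<ge> 1 \<Longrightarrow> osum_top a n = {z \<in> osum_carrier a n. fst z = n - 1}"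
  unfolding osum_top_def osum_carrier_def by auto

lemma osum_up_closed_if_exceptional:
  assumes "n \<ge> 1" "\<forall>i<n. 0 < a i" and ic: "interval_closed (osum_carrier a n) osum_le I"
    and exc: "I = {} \<or> osum_top a n \<subseteq> I \<or> I \<subseteq> osum_top a n"
    and y: "y \<in> I" and z: "z \<in> osum_carrier a n" "fst y < fst z"
  shows "z \<in> I"
proof -
  have top: "osum_top a n = {z \<in> osum_carrier a n. fst z = n - 1}" using osum_top_eq[OF assms(1)] .
  have z_level: "fst z \<le> n - 1" using z(1) unfolding osum_carrier_def by auto
  consider "osum_top a n \<subseteq> I" | "I \<subseteq> osum_top a n" using exc y by blast
  then show ?thesis
  proof cases
    case 1
    have "(n - 1, 0) \<in> I" using 1 assms(1,2) unfolding osum_top_def by auto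
    then show ?thesis
      using 1 top z z_level interval_closed_osumD[OF ic y _ z(1), of "(n - 1, 0)"] by fastforce
  next
    case 2
    then show ?thesis using y z(2) z_level top by auto
  qed
qed

lemma osum_window_if_not_exceptional:
  assumes "n \<ge> 1" and ic: "interval_closed (osum_carrier a n) osum_le I"
    and exc: "\<not> (I = {} \<or> osum_top a n \<subseteq> I \<or> I \<subseteq> osum_top a n)"
  obtains y0 w where "y0 \<in> I" "\<And>y. y \<in> I \<Longrightarrow> fst y0 \<le> fst y"
    and "w \<in> osum_carrier a n - I" "fst y0 < fst w"
    and "\<And>z. z \<in> osum_carrier a n - I \<Longrightarrow> fst y0 < fst z \<Longrightarrow> fst w \<le> fst z"
proof -
  let ?P = "osum_carrier a n"
  have "I \<subseteq> ?P" using ic by (simp add: interval_closed_def)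
  obtain y0 where y0: "y0 \<in> I" and y0_min: "\<And>y. y \<in> I \<Longrightarrow> fst y0 \<le> fst y"
    using exc ex_has_least_nat[of "\<lambda>y. y \<in> I" _ fst] by blast
  have levels: "fst z < n" if "z \<in> ?P" for z using that unfolding osum_carrier_def by auto
  have "\<exists>z. z \<in> ?P - I \<and> fst y0 < fst z"
  proof (rule ccontr)
    assume above_full: "\<nexists>z. z \<in> ?P - I \<and> fst y0 < fst z"
    show False
    proof (cases "fst y0 = n - 1")
      case True
      then have "I \<subseteq> osum_top a n"
        using y0_min levels \<open>I \<subseteq> ?P\<close> osum_top_eq[OF assms(1)] by fastforce
      then show False using exc by blast
    next
      case False
      then have "osum_top a n \<subseteq> I"
        using above_full levels[OF subsetD[OF \<open>I \<subseteq> ?P\<close> y0]] osum_top_eq[OF assms(1)] by fastforce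
      then show False using exc by blast
    qed
  qed
  then obtain w where "w \<in> ?P - I" "fst y0 < fst w"
    and "\<And>z. z \<in> ?P - I \<Longrightarrow> fst y0 < fst z \<Longrightarrow> fst w \<le> fst z"
    using ex_has_least_nat[of "\<lambda>z. z \<in> ?P - I \<and> fst y0 < fst z" _ fst] by blast
  then show ?thesis using that y0 y0_min by blast
qed

lemma osum_down_ceiling_diff_down_minimal:
  assumes "I \<subseteq> P" and y0: "y0 \<in> I" and y0_min: "\<And>y. y \<in> I \<Longrightarrow> fst y0 \<le> fst y"
    and w: "w \<in> P - I" "fst y0 < fst w"
    and w_min: "\<And>z. z \<in> P - I \<Longrightarrow> fst y0 < fst z \<Longrightarrow> fst w \<le> fst z"
  shows "down_closure P osum_le (ceiling_ic P osum_le I) - down_closure P osum_le (minimal_elts osum_le I) =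
    {z \<in> P. fst y0 \<le> fst z \<and> fst z \<le> fst w \<and> (z \<in> I \<longrightarrow> fst y0 < fst z \<and> fst z < fst w)}"
proof -
  have ceiling: "ceiling_ic P osum_le I = {z \<in> P - I. fst z = fst w}"
    by (rule ceiling_ic_osum[OF assms])
  have minimal: "minimal_elts osum_le I = {y \<in> I. fst y = fst y0}"
    by (rule minimal_elts_osum[OF y0 y0_min])
  have down_ceiling: "z \<in> down_closure P osum_le (ceiling_ic P osum_le I) \<longleftrightarrow>
      z \<in> P \<and> (fst z < fst w \<or> fst z = fst w \<and> z \<notin> I)" for z
  proof
    assume "z \<in> down_closure P osum_le (ceiling_ic P osum_le I)"
    then show "z \<in> P \<and> (fst z < fst w \<or> fst z = fst w \<and> z \<notin> I)"
      unfolding ceiling down_closure_osum by auto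
  next
    assume "z \<in> P \<and> (fst z < fst w \<or> fst z = fst w \<and> z \<notin> I)"
    then show "z \<in> down_closure P osum_le (ceiling_ic P osum_le I)"
      unfolding ceiling down_closure_osum using w(1) by blast
  qed
  have down_minimal: "z \<in> down_closure P osum_le (minimal_elts osum_le I) \<longleftrightarrow>
      z \<in> P \<and> (fst z < fst y0 \<or> fst z = fst y0 \<and> z \<in> I)" for z
  proof
    assume "z \<in> down_closure P osum_le (minimal_elts osum_le I)"
    then show "z \<in> P \<and> (fst z < fst y0 \<or> fst z = fst y0 \<and> z \<in> I)"
      unfolding minimal down_closure_osum by auto
  next
    assume "z \<in> P \<and> (fst z < fst y0 \<or> fst z = fst y0 \<and> z \<in> I)"
    then show "z \<in> down_closure P osum_le (minimal_elts osum_le I)"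
      unfolding minimal down_closure_osum using y0 by blast
  qed
  show ?thesis
    using w(2) by (auto simp: down_ceiling down_minimal)
qed

theorem theorem3p12:
  fixes a :: "nat \<Rightarrow> nat" and n :: nat and I :: "(nat \<times> nat) set"
    and xs :: "(nat \<times> nat) list"
  assumes "n \<ge> 1"
    and "\<forall>i<n. 0 < a i"
    and "interval_closed (osum_carrier a n) osum_le I"
    and "linear_extension (osum_carrier a n) osum_le xs"
  shows "rowmotion (osum_carrier a n) osum_le xs I =
    (if I = {} \<or> osum_top a n \<subseteq> I \<or> I \<subseteq> osum_top a n
     then osum_carrier a n - I
     else down_closure (osum_carrier a n) osum_le (ceiling_ic (osum_carrier a n) osum_le I)
          - down_closure (osum_carrier a n) osum_le (minimal_elts osum_le I))"
proof (cases "I = {} \<or> osum_top a n \<subseteq> I \<or> I \<subseteq> osum_top a n")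
  case True
  have "rowmotion (osum_carrier a n) osum_le xs I = osum_carrier a n - I"
    using rowmotion_osum_up_closed[OF assms(3,4)] osum_up_closed_if_exceptional[OF assms(1-3) True]
    by blast
  with True show ?thesis by simp
next
  case False
  obtain y0 w where y0: "y0 \<in> I" "\<And>y. y \<in> I \<Longrightarrow> fst y0 \<le> fst y"
    and w: "w \<in> osum_carrier a n - I" "fst y0 < fst w"
    and w_min: "\<And>z. z \<in> osum_carrier a n - I \<Longrightarrow> fst y0 < fst z \<Longrightarrow> fst w \<le> fst z"
    using osum_window_if_not_exceptional[OF assms(1,3) False] by blast
  have "I \<subseteq> osum_carrier a n" using assms(3) by (simp add: interval_closed_def)
  have "rowmotion (osum_carrier a n) osum_le xs I = {z \<in> osum_carrier a n.
      fst y0 \<le> fst z \<and> fst z \<le> fst w \<and> (z \<in> I \<longrightarrow> fst y0 < fst z \<and> fst z < fst w)}"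
    using rowmotion_osum_window[OF assms(3,4) y0 w w_min] .
  also have "\<dots> = down_closure (osum_carrier a n) osum_le (ceiling_ic (osum_carrier a n) osum_le I)
      - down_closure (osum_carrier a n) osum_le (minimal_elts osum_le I)"
    using osum_down_ceiling_diff_down_minimal[OF \<open>I \<subseteq> osum_carrier a n\<close> y0 w w_min] by simp
  finally show ?thesis using False by simp
qed

end
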